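(* Let $N\ge4$ be even and, for $n=0,\dots,N-1$, let $z_{N,n}=e^{2\pi i(n+1)/N}-e^{2\pi in/N}$. Then the region $$\hat\Omega_N=\Big\{z\in\mathbb C:\sum_{n=0}^{N/2-1}|z\wedge z_{N,n}|\le1\Big\}$$ is a regular $N$-gon inscribed in the circle of radius $\frac12\sec(\pi/N)$ centered at $0$, and its area is $\frac N4\tan(\pi/N)$.
   Context: For $z,w\in\mathbb C$, $|z\wedge w|=|\operatorname{Im}(\bar zw)|$ is the area of the parallelogram spanned by $z$ and $w$. The $z_{N,n}$ are the side vectors of the regular $N$-gon with vertices at the $N$-th roots of unity. *)

theory Defs
  imports "HOL-Analysis.Analysis"
begin

definition wedge :: "complex \<Rightarrow> complex \<Rightarrow> real" where
  "wedge z w = Im (cnj z * w)"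

definition zN :: "nat \<Rightarrow> nat \<Rightarrow> complex" where
  "zN N n = cis (2 * pi * real (n + 1) / real N) - cis (2 * pi * real n / real N)"

definition Omega_hat :: "nat \<Rightarrow> complex set" where
  "Omega_hat N = {z. (\<Sum>n<N div 2. \<bar>wedge z (zN N n)\<bar>) \<le> 1}"

definition regular_ngon_inscribed :: "nat \<Rightarrow> complex \<Rightarrow> real \<Rightarrow> complex set \<Rightarrow> bool" where
  "regular_ngon_inscribed N c R P \<longleftrightarrow>
     (\<exists>\<theta>::real. P = convex hull {c + complex_of_real R * cis (\<theta> + 2 * pi * real k / real N) | k. k < N})"

end

theory Submission
  imports Defs
begin

text \<open>
  Let a = pi/N and R = 1/(2 cos a). The points v_j = R i e^(i(2j+1)a) point in the directions of
  the sides z_(N,j), so that v_j \<wedge> z_(N,n) = tan a sin(2(n-j)a), and the gauge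
  z \<mapsto> \<Sum> |z \<wedge> z_(N,n)| of the region equals tan a cot a = 1 at every v_j.
  On the cone spanned by two consecutive vertices v_j, v_(j+1) no summand changes sign, so the
  gauge is linear there and takes the value s + t at s v_j + t v_(j+1). Since these N cones cover
  the plane, the region is the union of the triangles conv {0, v_j, v_(j+1)}, i.e. the convex hull
  of the v_j. The triangles overlap only along rays through vertices, and each has area
  |v_j \<wedge> v_(j+1)|/2 = tan(a)/4.
\<close>

section \<open>Areas of triangles in the complex plane\<close>

text \<open>Lebesgue measure on \<^typ>\<open>complex\<close> is transported from \<^typ>\<open>real^2\<close>, where
  the library computes areas of triangles (lemma content_triangle).\<close>

definition vec_of_complex :: "complex \<Rightarrow> real^2" where
  "vec_of_complex z = vector [Re z, Im z]"

definition complex_of_vec :: "real^2 \<Rightarrow> complex" where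
  "complex_of_vec x = Complex (x$1) (x$2)"

lemma vec_of_complex_nth [simp]: "vec_of_complex z $ 1 = Re z" "vec_of_complex z $ 2 = Im z"
  by (simp_all add: vec_of_complex_def vector_2)

lemma vec_of_complex_of_vec [simp]: "vec_of_complex (complex_of_vec x) = x"
  by (simp add: complex_of_vec_def vec_eq_iff forall_2)

lemma complex_of_vec_of_complex [simp]: "complex_of_vec (vec_of_complex z) = z"
  by (simp add: complex_of_vec_def complex_eq_iff)

lemma linear_vec_of_complex: "linear vec_of_complex"
  by (rule linearI) (simp_all add: vec_eq_iff forall_2)

lemma linear_complex_of_vec: "linear complex_of_vec"
  by (rule linearI) (simp_all add: complex_of_vec_def complex_eq_iff)

lemma vec_of_complex_image_cbox: "vec_of_complex ` cbox u v = cbox (vec_of_complex u) (vec_of_complex v)"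
proof (intro equalityI subsetI)
  fix x assume "x \<in> cbox (vec_of_complex u) (vec_of_complex v)"
  then have "complex_of_vec x \<in> cbox u v"
    by (auto simp: in_cbox_complex_iff mem_box_cart forall_2 complex_of_vec_def)
  then show "x \<in> vec_of_complex ` cbox u v"
    by (metis image_eqI vec_of_complex_of_vec)
qed (auto simp: in_cbox_complex_iff mem_box_cart forall_2)

lemma complex_of_vec_image_cbox:
  "complex_of_vec ` cbox u v = cbox (complex_of_vec u) (complex_of_vec v)"
proof (intro equalityI subsetI)
  fix z assume "z \<in> cbox (complex_of_vec u) (complex_of_vec v)"
  then have "vec_of_complex z \<in> cbox u v"
    by (auto simp: in_cbox_complex_iff mem_box_cart forall_2 complex_of_vec_def)
  then show "z \<in> complex_of_vec ` cbox u v"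
    by (metis image_eqI complex_of_vec_of_complex)
qed (auto simp: in_cbox_complex_iff mem_box_cart forall_2 complex_of_vec_def)

lemma content_vec_of_complex_image_cbox:
  "Henstock_Kurzweil_Integration.content (vec_of_complex ` cbox u v) =
   Henstock_Kurzweil_Integration.content (cbox u v)"
proof -
  have "cbox (vec_of_complex u) (vec_of_complex v) = {} \<longleftrightarrow> cbox u v = {}"
    by (metis image_is_empty vec_of_complex_image_cbox)
  then show ?thesis
    by (simp add: vec_of_complex_image_cbox content_cbox_if_cart content_cbox_if UNIV_2 Basis_complex_def)
qed

lemma measure_complex_of_vec_image:
  assumes "bounded T" "T \<in> lmeasurable"
  shows "complex_of_vec ` T \<in> lmeasurable \<and> measure lebesgue (complex_of_vec ` T) = measure lebesgue T"
proof -
  obtain a b where ab: "T \<subseteq> cbox a b"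
    using assms(1) bounded_subset_cbox_symmetric by blast
  have "(indicat_real T has_integral measure lebesgue T) UNIV"
    using assms(2) lmeasurable_iff_has_integral by blast
  then have "((\<lambda>x. if x \<in> cbox a b then indicat_real T x else 0) has_integral measure lebesgue T) UNIV"
    by (rule has_integral_eq[rotated]) (use ab in \<open>auto simp: indicator_def\<close>)
  then have T_integral: "(indicat_real T has_integral measure lebesgue T) (cbox a b)"
    using has_integral_restrict_UNIV by blast
  have "((\<lambda>x. indicat_real T (vec_of_complex x)) has_integral (1 / 1) *\<^sub>R measure lebesgue T)
      (complex_of_vec ` cbox a b)"
    by (rule has_integral_twiddle[OF _ _ _ _ _ _ _ T_integral])
      (auto simp: linear_continuous_at linear_linear linear_vec_of_complex vec_of_complex_image_cbox
        complex_of_vec_image_cbox content_vec_of_complex_image_cbox[unfolded vec_of_complex_image_cbox])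
  moreover have "indicat_real (complex_of_vec ` T) = (\<lambda>x. indicat_real T (vec_of_complex x))"
    by (auto simp: indicator_def image_iff fun_eq_iff) (metis complex_of_vec_of_complex)
  ultimately have "(indicat_real (complex_of_vec ` T) has_integral measure lebesgue T) (complex_of_vec ` cbox a b)"
    by simp
  then have "(indicat_real (complex_of_vec ` T) has_integral measure lebesgue T) UNIV"
    by (rule has_integral_on_superset) (use ab in \<open>auto simp: indicator_def\<close>)
  then show ?thesis
    using lmeasurable_iff_indicator_has_integral by metis
qed

lemma wedge_add_left [simp]: "wedge (z + z') w = wedge z w + wedge z' w"
  by (simp add: wedge_def algebra_simps)

lemma wedge_add_right [simp]: "wedge z (w + w') = wedge z w + wedge z w'"
  by (simp add: wedge_def algebra_simps)

lemma wedge_scaleR_left [simp]: "wedge (r *\<^sub>R z) w = r * wedge z w"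
  by (simp add: wedge_def scaleR_conv_of_real algebra_simps)

lemma wedge_scaleR_right [simp]: "wedge z (r *\<^sub>R w) = r * wedge z w"
  by (simp add: wedge_def scaleR_conv_of_real algebra_simps)

lemma wedge_cis: "wedge (cis x) (cis y) = sin (y - x)"
  by (simp add: wedge_def sin_diff algebra_simps)

lemma measure_triangle:
  fixes a b :: complex
  shows "convex hull {0, a, b} \<in> lmeasurable \<and> measure lebesgue (convex hull {0, a, b}) = \<bar>wedge a b\<bar> / 2"
proof -
  let ?T = "convex hull {0, vec_of_complex a, vec_of_complex b}"
  have "compact ?T"
    by (intro finite_imp_compact_convex_hull) auto
  moreover have "complex_of_vec ` ?T = convex hull {0, a, b}"
    by (simp add: convex_hull_linear_image[OF linear_complex_of_vec] linear_0[OF linear_complex_of_vec])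
  moreover have "measure lebesgue ?T = \<bar>wedge a b\<bar> / 2"
    using \<open>compact ?T\<close> by (simp add: measure_completion compact_imp_closed content_triangle wedge_def
        abs_minus_commute algebra_simps)
  ultimately show ?thesis
    using measure_complex_of_vec_image[of ?T] by (auto simp: compact_imp_bounded lmeasurable_compact)
qed

lemma negligible_span_singleton: "negligible (span {x :: 'a :: euclidean_space})" if "2 \<le> DIM('a)"
  using that dim_le_card'[of "{x}"] by (intro negligible_lowdim) simp

lemma sum_lessThan_periodic_shift:
  fixes g :: "int \<Rightarrow> 'a::comm_monoid_add"
  assumes periodic: "\<And>e. g (e + int M) = g e"
  shows "(\<Sum>n<M. g (int n - j)) = (\<Sum>n<M. g (int n))"
proof -
  have shift: "(\<Sum>n<M. g (int n - (j + 1))) = (\<Sum>n<M. g (int n - j))" for j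
  proof (cases M)
    case 0
    then show ?thesis by simp
  next
    case (Suc m)
    have "(\<Sum>n<M. g (int n - (j + 1))) = g (- 1 - j) + (\<Sum>i<m. g (int i - j))"
      unfolding Suc by (subst sum.lessThan_Suc_shift) (simp add: algebra_simps)
    also have "g (- 1 - j) = g (int m - j)"
      using periodic[of "- 1 - j"] Suc by (simp add: algebra_simps)
    finally show ?thesis
      unfolding Suc by (simp add: add.commute)
  qed
  show ?thesis
  proof (induction j rule: int_induct[where k = 0])
    case base
    then show ?case by simp
  next
    case (step1 i)
    then show ?case using shift[of i] by simp
  next
    case (step2 i)
    then show ?case using shift[of "i - 1"] by simp
  qed
qed

lemma sin_mult_sum_sin_even_multiples:
  "2 * sin a * (\<Sum>n<K. sin (2 * real n * a)) = cos a - cos ((2 * real K - 1) * a)"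
proof (induction K)
  case 0
  then show ?case by simp
next
  case (Suc K)
  have "(2 * real K - 1) * a = 2 * real K * a - a" "(2 * real (Suc K) - 1) * a = 2 * real K * a + a"
    by (simp_all add: algebra_simps)
  then have "cos ((2 * real K - 1) * a) - cos ((2 * real (Suc K) - 1) * a) = 2 * sin a * sin (2 * real K * a)"
    by (simp add: cos_diff cos_add)
  then show ?case
    using Suc by (simp add: distrib_left)
qed

lemma abs_add_of_nonneg_mult: "0 \<le> (a::real) * b \<Longrightarrow> \<bar>a + b\<bar> = \<bar>a\<bar> + \<bar>b\<bar>"
  by (auto simp: zero_le_mult_iff)

lemma cis_cone_decomposition:
  assumes "0 < d" "d < pi"
  obtains q :: int and s t :: real where "0 \<le> s" "0 \<le> t"
    "z = s *\<^sub>R cis (\<theta> + of_int q * d) + t *\<^sub>R cis (\<theta> + of_int (q + 1) * d)"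
proof -
  define q where "q = \<lfloor>(Arg z - \<theta>) / d\<rfloor>"
  define b where "b = \<theta> + of_int q * d"
  define e where "e = Arg z - b"
  have "of_int q \<le> (Arg z - \<theta>) / d" "(Arg z - \<theta>) / d < of_int q + 1"
    unfolding q_def by linarith+
  then have e: "0 \<le> e" "e \<le> d"
    using assms(1) by (simp_all add: e_def b_def field_simps)
  have sin_d: "0 < sin d"
    using assms by (simp add: sin_gt_zero)
  define s where "s = cmod z * sin (d - e) / sin d"
  define t where "t = cmod z * sin e / sin d"
  have "0 \<le> s" "0 \<le> t"
    using e assms sin_d by (simp_all add: s_def t_def sin_ge_zero)
  have "z = of_real (cmod z) * cis (b + e)"
    using rcis_cmod_Arg[of z] by (simp add: rcis_def e_def)
  then have "of_real (sin d) * z = of_real (cmod z) * (of_real (sin d) * cis (b + e))"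
    by (simp add: ac_simps)
  also have "of_real (sin d) * cis (b + e) = of_real (sin (d - e)) * cis b + of_real (sin e) * cis (b + d)"
    by (simp add: complex_eq_iff cos_add sin_add sin_diff cos_diff algebra_simps)
  also have "of_real (cmod z) * \<dots> = of_real (sin d) * (of_real s * cis b + of_real t * cis (b + d))"
    using sin_d by (simp add: s_def t_def distrib_left)
  finally have "of_real (sin d) * z = of_real (sin d) * (of_real s * cis b + of_real t * cis (b + d))" .
  then have "z = of_real s * cis b + of_real t * cis (b + d)"
    using sin_d by simp
  moreover have "b + d = \<theta> + of_int (q + 1) * d"
    by (simp add: b_def algebra_simps)
  ultimately have "z = s *\<^sub>R cis (\<theta> + of_int q * d) + t *\<^sub>R cis (\<theta> + of_int (q + 1) * d)"
    by (simp only: b_def scaleR_conv_of_real)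
  then show ?thesis
    using that \<open>0 \<le> s\<close> \<open>0 \<le> t\<close> by blast
qed

lemma cis_add_of_int_times_2pi [simp]: "cis (x + 2 * pi * of_int n) = cis x"
  by (simp flip: cis_mult)

lemma two_pi_fraction_mod:
  assumes "N \<noteq> 0"
  shows "2 * pi * of_int e / real N = 2 * pi * of_int (e mod int N) / real N + 2 * pi * of_int (e div int N)"
proof -
  have "real_of_int e = of_int (e mod int N) + of_int (e div int N) * real N"
    by (metis div_mult_mod_eq of_int_add of_int_mult of_int_of_nat_eq add.commute)
  then show ?thesis
    using assms by (subst \<open>real_of_int e = _\<close>) (simp add: field_simps)
qed

definition sin_turn :: "nat \<Rightarrow> int \<Rightarrow> real" where
  "sin_turn N e = sin (2 * pi * of_int e / real N)"

lemma sin_turn_mod: "sin_turn N (e mod int N) = sin_turn N e"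
proof (cases "N = 0")
  case False
  then show ?thesis
    unfolding sin_turn_def two_pi_fraction_mod[OF False, of e] by (metis cis.sel(2) cis_add_of_int_times_2pi)
qed simp

lemma sin_turn_mod_cong: "e mod int N = e' mod int N \<Longrightarrow> sin_turn N e = sin_turn N e'"
  by (metis sin_turn_mod)

lemma sin_turn_uminus [simp]: "sin_turn N (- e) = - sin_turn N e"
  by (simp add: sin_turn_def)

lemma sin_turn_add_half:
  assumes "even N"
  shows "sin_turn N (e + int (N div 2)) = - sin_turn N e"
proof (cases "N = 0")
  case False
  then have "2 * pi * of_int (e + int (N div 2)) / real N = 2 * pi * of_int e / real N + pi"
    using assms by (auto simp: field_simps elim!: evenE)
  then show ?thesis
    by (simp add: sin_turn_def)
qed (simp add: sin_turn_def)

lemma sin_turn_arg_le_pi: "2 * e \<le> int N \<Longrightarrow> 2 * pi * of_int e / real N \<le> pi"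
proof (cases "N = 0")
  case False
  assume "2 * e \<le> int N"
  then have "pi * (2 * of_int e) \<le> pi * real N"
    by (intro mult_left_mono) (simp_all flip: of_int_le_iff)
  then show ?thesis
    using False by (simp add: field_simps)
qed simp

lemma sin_turn_nonneg: "0 \<le> e \<Longrightarrow> 2 * e \<le> int N \<Longrightarrow> 0 \<le> sin_turn N e"
  unfolding sin_turn_def by (intro sin_ge_zero sin_turn_arg_le_pi) simp_all

lemma sin_turn_pos:
  assumes "0 < e" "2 * e < int N"
  shows "0 < sin_turn N e"
proof -
  have "pi * (2 * of_int e) < pi * real N"
    using assms(2) by (intro mult_strict_left_mono) (simp_all flip: of_int_less_iff)
  then show ?thesis
    using assms unfolding sin_turn_def by (intro sin_gt_zero) (simp_all add: field_simps)
qed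

lemma sin_turn_nonpos:
  assumes "int N \<le> 2 * e" "e \<le> int N"
  shows "sin_turn N e \<le> 0"
proof -
  have "sin_turn N e = sin_turn N (e - int N)"
    by (rule sin_turn_mod_cong) simp
  also have "\<dots> = - sin_turn N (int N - e)"
    using sin_turn_uminus[of N "int N - e"] by simp
  finally show ?thesis
    using assms by (simp add: sin_turn_nonneg)
qed

lemma sin_turn_mult_pred_nonneg:
  assumes "even N"
  shows "0 \<le> sin_turn N e * sin_turn N (e - 1)"
proof (cases "N = 0")
  case False
  define r where "r = e mod int N"
  have r: "0 \<le> r" "r < int N"
    using False by (simp_all add: r_def)
  have reduce: "sin_turn N e = sin_turn N r" "sin_turn N (e - 1) = sin_turn N (r - 1)"
    unfolding r_def by (simp add: sin_turn_mod) (rule sin_turn_mod_cong, simp add: mod_diff_left_eq)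
  consider "r = 0" | "0 < r" "2 * r \<le> int N" | "int N < 2 * r"
    using r by linarith
  then have "0 \<le> sin_turn N r * sin_turn N (r - 1)"
  proof cases
    case 1
    then show ?thesis
      by (simp add: sin_turn_def)
  next
    case 2
    then show ?thesis
      by (intro mult_nonneg_nonneg sin_turn_nonneg) simp_all
  next
    case 3
    have "int N \<le> 2 * (r - 1)"
      using 3 assms by (auto elim!: evenE)
    then show ?thesis
      using r 3 by (intro mult_nonpos_nonpos sin_turn_nonpos) simp_all
  qed
  then show ?thesis
    unfolding reduce .
qed (simp add: sin_turn_def)

lemma sum_abs_sin_turn:
  assumes "even N" "0 < N"
  shows "(\<Sum>n<N div 2. \<bar>sin_turn N (int n - j)\<bar>) = cot (pi / real N)"
proof -
  define a where "a = pi / real N"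
  have "(\<Sum>n<N div 2. \<bar>sin_turn N (int n - j)\<bar>) = (\<Sum>n<N div 2. \<bar>sin_turn N (int n)\<bar>)"
    using sin_turn_add_half[OF assms(1)] by (intro sum_lessThan_periodic_shift) simp
  also have "\<dots> = (\<Sum>n<N div 2. sin (2 * real n * a))"
  proof (intro sum.cong refl)
    fix n assume "n \<in> {..<N div 2}"
    then have "0 \<le> sin_turn N (int n)"
      by (intro sin_turn_nonneg) auto
    then show "\<bar>sin_turn N (int n)\<bar> = sin (2 * real n * a)"
      using assms by (simp add: sin_turn_def a_def field_simps)
  qed
  finally have sum_eq: "(\<Sum>n<N div 2. \<bar>sin_turn N (int n - j)\<bar>) = (\<Sum>n<N div 2. sin (2 * real n * a))" .
  have "(2 * real (N div 2) - 1) * a = pi - a"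
    using assms by (auto simp: a_def field_simps elim!: evenE)
  then have "2 * sin a * (\<Sum>n<N div 2. sin (2 * real n * a)) = 2 * cos a"
    by (simp add: sin_mult_sum_sin_even_multiples)
  moreover have "0 < sin a"
    using assms by (auto simp: a_def field_simps elim!: evenE intro!: sin_gt_zero)
  ultimately show ?thesis
    unfolding sum_eq by (simp add: cot_def a_def field_simps)
qed

section \<open>The vertices of the polygon\<close>

definition side_direction :: "nat \<Rightarrow> int \<Rightarrow> complex" where
  "side_direction N j = cis (pi / 2 + pi / real N + 2 * pi * of_int j / real N)"

definition polygon_vertex :: "nat \<Rightarrow> int \<Rightarrow> complex" where
  "polygon_vertex N j = (1 / (2 * cos (pi / real N))) *\<^sub>R side_direction N j"

definition polygon_triangle :: "nat \<Rightarrow> nat \<Rightarrow> complex set" where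
  "polygon_triangle N k = convex hull {0, polygon_vertex N (int k), polygon_vertex N (int k + 1)}"

definition Omega_gauge :: "nat \<Rightarrow> complex \<Rightarrow> real" where
  "Omega_gauge N z = (\<Sum>n<N div 2. \<bar>wedge z (zN N n)\<bar>)"

lemma Omega_hat_eq: "Omega_hat N = {z. Omega_gauge N z \<le> 1}"
  by (simp add: Omega_hat_def Omega_gauge_def)

lemma zN_eq_side_direction: "zN N n = (2 * sin (pi / real N)) *\<^sub>R side_direction N (int n)"
proof (cases "N = 0")
  case False
  define a where "a = pi / real N"
  define y where "y = 2 * pi * real n / real N + a"
  have "2 * pi * real (n + 1) / real N = y + a" "2 * pi * real n / real N = y - a"
    using False by (simp_all add: y_def a_def field_simps)
  then have "zN N n = cis (y + a) - cis (y - a)"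
    by (simp add: zN_def)
  also have "\<dots> = (2 * sin a) *\<^sub>R cis (pi / 2 + y)"
    by (simp add: complex_eq_iff cos_add sin_add cos_diff sin_diff)
  finally show ?thesis
    by (simp add: side_direction_def y_def a_def add_ac)
qed (simp add: zN_def)

lemma wedge_side_direction: "wedge (side_direction N j) (side_direction N k) = sin_turn N (k - j)"
  by (simp add: side_direction_def sin_turn_def wedge_cis diff_divide_distrib algebra_simps)

lemma wedge_side_direction_polygon_vertex:
  "wedge (side_direction N j) (polygon_vertex N k) = sin_turn N (k - j) / (2 * cos (pi / real N))"
  by (simp add: polygon_vertex_def wedge_side_direction)

lemma wedge_polygon_vertex_zN:
  "wedge (polygon_vertex N j) (zN N n) = tan (pi / real N) * sin_turn N (int n - j)"
  by (simp add: polygon_vertex_def zN_eq_side_direction wedge_side_direction tan_def)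

lemma side_direction_mod: "side_direction N (j mod int N) = side_direction N j"
proof (cases "N = 0")
  case False
  then show ?thesis
    unfolding side_direction_def two_pi_fraction_mod[OF False, of j] by (simp flip: add.assoc)
qed simp

lemma polygon_vertex_mod: "polygon_vertex N (j mod int N) = polygon_vertex N j"
  by (simp add: polygon_vertex_def side_direction_mod)

lemma side_direction_add_half:
  assumes "even N" "0 < N"
  shows "side_direction N (j + int (N div 2)) = - side_direction N j"
proof -
  have "2 * pi * of_int (j + int (N div 2)) / real N = 2 * pi * of_int j / real N + pi"
    using assms by (auto simp: field_simps elim!: evenE)
  then show ?thesis
    by (simp add: side_direction_def minus_cis add_ac)
qed

lemma Omega_gauge_convex_comb_le:
  assumes "0 \<le> u" "0 \<le> v"
  shows "Omega_gauge N (u *\<^sub>R x + v *\<^sub>R y) \<le> u * Omega_gauge N x + v * Omega_gauge N y"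
proof -
  have "\<bar>wedge (u *\<^sub>R x + v *\<^sub>R y) w\<bar> \<le> u * \<bar>wedge x w\<bar> + v * \<bar>wedge y w\<bar>" for w
    using abs_triangle_ineq[of "u * wedge x w" "v * wedge y w"] assms by (simp add: abs_mult)
  then have "Omega_gauge N (u *\<^sub>R x + v *\<^sub>R y) \<le> (\<Sum>n<N div 2. u * \<bar>wedge x (zN N n)\<bar> + v * \<bar>wedge y (zN N n)\<bar>)"
    unfolding Omega_gauge_def by (intro sum_mono)
  then show ?thesis
    by (simp add: Omega_gauge_def sum.distrib sum_distrib_left)
qed

lemma convex_Omega_hat: "convex (Omega_hat N)"
  unfolding Omega_hat_eq
proof (rule convexI, clarsimp)
  fix x y :: complex and u v :: real
  assume "Omega_gauge N x \<le> 1" "Omega_gauge N y \<le> 1" "0 \<le> u" "0 \<le> v" "u + v = 1"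
  then have "u * Omega_gauge N x + v * Omega_gauge N y \<le> 1"
    by (metis add_mono mult_left_le)
  then show "Omega_gauge N (u *\<^sub>R x + v *\<^sub>R y) \<le> 1"
    using Omega_gauge_convex_comb_le[of u v N x y] \<open>0 \<le> u\<close> \<open>0 \<le> v\<close> by linarith
qed

section \<open>Decomposition of the region into triangles\<close>

context
  fixes N :: nat
  assumes N_ge_4: "4 \<le> N" and N_even: "even N"
begin

lemma pi_over_N_bounds: "0 < pi / real N" "pi / real N < pi / 2"
  using N_ge_4 by (auto simp: field_simps)

lemma cos_pi_over_N_pos: "0 < cos (pi / real N)"
  using pi_over_N_bounds by (intro cos_gt_zero_pi) auto

lemma sin_pi_over_N_pos: "0 < sin (pi / real N)"
  using pi_over_N_bounds pi_gt_zero by (intro sin_gt_zero) linarith+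

lemma Omega_gauge_polygon_vertex: "Omega_gauge N (polygon_vertex N j) = 1"
proof -
  have "Omega_gauge N (polygon_vertex N j) = tan (pi / real N) * (\<Sum>n<N div 2. \<bar>sin_turn N (int n - j)\<bar>)"
    using cos_pi_over_N_pos sin_pi_over_N_pos
    by (simp add: Omega_gauge_def wedge_polygon_vertex_zN abs_mult sum_distrib_left tan_def)
  also have "\<dots> = tan (pi / real N) * cot (pi / real N)"
    using N_ge_4 N_even by (simp add: sum_abs_sin_turn)
  also have "\<dots> = 1"
    using cos_pi_over_N_pos sin_pi_over_N_pos by (simp add: tan_def cot_def)
  finally show ?thesis .
qed

lemma Omega_gauge_cone:
  assumes "0 \<le> s" "0 \<le> t"
  shows "Omega_gauge N (s *\<^sub>R polygon_vertex N j + t *\<^sub>R polygon_vertex N (j + 1)) = s + t"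
proof -
  have "\<bar>wedge (s *\<^sub>R polygon_vertex N j + t *\<^sub>R polygon_vertex N (j + 1)) (zN N n)\<bar> =
      s * \<bar>wedge (polygon_vertex N j) (zN N n)\<bar> + t * \<bar>wedge (polygon_vertex N (j + 1)) (zN N n)\<bar>" for n
  proof -
    have same_sign: "0 \<le> sin_turn N (int n - j) * sin_turn N (int n - j - 1)"
      using N_even by (rule sin_turn_mult_pred_nonneg)
    have "0 \<le> (s * t * (tan (pi / real N))\<^sup>2) * (sin_turn N (int n - j) * sin_turn N (int n - j - 1))"
      by (rule mult_nonneg_nonneg[OF _ same_sign]) (use assms in simp)
    then have "0 \<le> (s * wedge (polygon_vertex N j) (zN N n)) * (t * wedge (polygon_vertex N (j + 1)) (zN N n))"
      by (simp add: wedge_polygon_vertex_zN diff_diff_eq power2_eq_square mult_ac)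
    then show ?thesis
      using assms by (simp add: abs_add_of_nonneg_mult abs_mult)
  qed
  then have "Omega_gauge N (s *\<^sub>R polygon_vertex N j + t *\<^sub>R polygon_vertex N (j + 1)) =
      s * Omega_gauge N (polygon_vertex N j) + t * Omega_gauge N (polygon_vertex N (j + 1))"
    by (simp add: Omega_gauge_def sum.distrib sum_distrib_left)
  then show ?thesis
    by (simp add: Omega_gauge_polygon_vertex)
qed

lemma polygon_vertex_cone_cover:
  obtains k s t where "k < N" "0 \<le> s" "0 \<le> t"
    "z = s *\<^sub>R polygon_vertex N (int k) + t *\<^sub>R polygon_vertex N (int k + 1)"
proof -
  define R where "R = 1 / (2 * cos (pi / real N))"
  have "0 < R"
    using cos_pi_over_N_pos by (simp add: R_def)
  have "0 < 2 * pi / real N" "2 * pi / real N < pi"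
    using N_ge_4 pi_over_N_bounds(2) by (simp_all add: field_simps)
  then obtain q :: int and s t where st: "0 \<le> s" "0 \<le> t"
    "z = s *\<^sub>R cis (pi / 2 + pi / real N + of_int q * (2 * pi / real N))
       + t *\<^sub>R cis (pi / 2 + pi / real N + of_int (q + 1) * (2 * pi / real N))"
    by (rule cis_cone_decomposition)
  then have z: "z = (s / R) *\<^sub>R polygon_vertex N q + (t / R) *\<^sub>R polygon_vertex N (q + 1)"
    using \<open>0 < R\<close> by (simp add: polygon_vertex_def side_direction_def R_def[symmetric] mult_ac)
  define k where "k = nat (q mod int N)"
  have "k < N" and k: "int k = q mod int N"
    using N_ge_4 by (simp_all add: k_def nat_less_iff)
  have "polygon_vertex N q = polygon_vertex N (int k)"
    by (simp add: k polygon_vertex_mod)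
  moreover have "polygon_vertex N (q + 1) = polygon_vertex N (int k + 1)"
    by (metis k mod_add_left_eq polygon_vertex_mod)
  ultimately show ?thesis
    using that[of k "s / R" "t / R"] z st \<open>k < N\<close> \<open>0 < R\<close> by simp
qed

lemma polygon_vertex_add_half: "polygon_vertex N (j + int (N div 2)) = - polygon_vertex N j"
  using N_ge_4 N_even by (simp add: polygon_vertex_def side_direction_add_half)

lemma polygon_vertex_in_convex_hull:
  "polygon_vertex N j \<in> convex hull ((\<lambda>k. polygon_vertex N (int k)) ` {..<N})"
proof (rule hull_inc)
  have "polygon_vertex N j = polygon_vertex N (int (nat (j mod int N)))" "nat (j mod int N) < N"
    using N_ge_4 by (simp_all add: polygon_vertex_mod nat_less_iff)
  then show "polygon_vertex N j \<in> (\<lambda>k. polygon_vertex N (int k)) ` {..<N}"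
    by blast
qed

lemma zero_in_convex_hull: "0 \<in> convex hull ((\<lambda>k. polygon_vertex N (int k)) ` {..<N})"
proof -
  have "(1/2) *\<^sub>R polygon_vertex N 0 + (1/2) *\<^sub>R polygon_vertex N (0 + int (N div 2))
      \<in> convex hull ((\<lambda>k. polygon_vertex N (int k)) ` {..<N})"
    by (intro convexD convex_convex_hull polygon_vertex_in_convex_hull) simp_all
  then show ?thesis
    by (simp only: polygon_vertex_add_half) simp
qed

lemma polygon_triangle_subset_convex_hull:
  "polygon_triangle N k \<subseteq> convex hull ((\<lambda>k. polygon_vertex N (int k)) ` {..<N})"
  unfolding polygon_triangle_def
  by (intro hull_minimal convex_convex_hull)
    (simp add: zero_in_convex_hull polygon_vertex_in_convex_hull)

lemma convex_hull_subset_Omega_hat: "convex hull ((\<lambda>k. polygon_vertex N (int k)) ` {..<N}) \<subseteq> Omega_hat N"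
  by (intro hull_minimal convex_Omega_hat) (auto simp: Omega_hat_eq Omega_gauge_polygon_vertex)

lemma Omega_hat_subset_polygon_triangles: "Omega_hat N \<subseteq> (\<Union>k<N. polygon_triangle N k)"
proof
  fix z assume "z \<in> Omega_hat N"
  obtain k s t where kst: "k < N" "0 \<le> s" "0 \<le> t"
    and z: "z = s *\<^sub>R polygon_vertex N (int k) + t *\<^sub>R polygon_vertex N (int k + 1)"
    by (rule polygon_vertex_cone_cover)
  have "s + t \<le> 1"
    using \<open>z \<in> Omega_hat N\<close> Omega_gauge_cone[OF kst(2,3), of "int k"] z by (simp add: Omega_hat_eq)
  then have "z \<in> polygon_triangle N k"
    unfolding polygon_triangle_def convex_hull_3 using kst z
    by (intro CollectI exI[of _ "1 - s - t"] exI[of _ s] exI[of _ t]) simp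
  then show "z \<in> (\<Union>k<N. polygon_triangle N k)"
    using kst by blast
qed

lemma Omega_hat_eq_convex_hull: "Omega_hat N = convex hull ((\<lambda>k. polygon_vertex N (int k)) ` {..<N})"
  using Omega_hat_subset_polygon_triangles polygon_triangle_subset_convex_hull convex_hull_subset_Omega_hat
  by blast

lemma Omega_hat_eq_Union_polygon_triangles: "Omega_hat N = (\<Union>k<N. polygon_triangle N k)"
  using Omega_hat_subset_polygon_triangles polygon_triangle_subset_convex_hull convex_hull_subset_Omega_hat
  by blast

lemma polygon_cone_interiors_disjoint:
  assumes jk: "j < N" "k < N" "j \<noteq> k" and st: "0 < s" "0 < t" "0 \<le> s'" "0 \<le> t'"
  shows "s *\<^sub>R polygon_vertex N (int j) + t *\<^sub>R polygon_vertex N (int j + 1) \<noteq>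
         s' *\<^sub>R polygon_vertex N (int k) + t' *\<^sub>R polygon_vertex N (int k + 1)"
    (is "?z \<noteq> ?z'")
proof
  assume "?z = ?z'"
  have wedge_cone: "wedge (side_direction N a) (x *\<^sub>R polygon_vertex N b + y *\<^sub>R polygon_vertex N c) =
      (x * sin_turn N (b - a) + y * sin_turn N (c - a)) / (2 * cos (pi / real N))" for a b c x y
    by (simp add: wedge_side_direction_polygon_vertex add_divide_distrib)
  text \<open>Points of the open cone between v_j and v_(j+1) are strictly counterclockwise from v_j and
    strictly clockwise from v_(j+1); a point of any other cone fails one of the two.\<close>
  have "0 < sin_turn N 1"
    using N_ge_4 by (intro sin_turn_pos) simp_all
  then have z_left: "0 < wedge (side_direction N (int j)) ?z"
    and z_right: "wedge (side_direction N (int j + 1)) ?z < 0"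
    using st cos_pi_over_N_pos unfolding wedge_cone by (simp_all add: sin_turn_def)
  define e where "e = (int k - int j) mod int N"
  have "e \<noteq> 0"
  proof
    assume "e = 0"
    then have "int N dvd int k - int j"
      by (simp add: e_def mod_eq_0_iff_dvd)
    then show False
      using jk dvd_imp_le_int[of "int k - int j" "int N"] by linarith
  qed
  then have e: "0 < e" "e < int N"
    using N_ge_4 by (simp_all add: e_def order_le_neq_trans)
  have "sin_turn N (int k - int j) = sin_turn N e" "sin_turn N (int k + 1 - int j) = sin_turn N (e + 1)"
    "sin_turn N (int k - (int j + 1)) = sin_turn N (e - 1)"
    "sin_turn N (int k + 1 - (int j + 1)) = sin_turn N e"
    by (rule sin_turn_mod_cong, simp add: e_def mod_simps algebra_simps)+
  then have z'_left: "wedge (side_direction N (int j)) ?z' =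
        (s' * sin_turn N e + t' * sin_turn N (e + 1)) / (2 * cos (pi / real N))"
    and z'_right: "wedge (side_direction N (int j + 1)) ?z' =
        (s' * sin_turn N (e - 1) + t' * sin_turn N e) / (2 * cos (pi / real N))"
    unfolding wedge_cone by simp_all
  show False
  proof (cases "2 * e \<le> int N")
    case True
    then have "0 \<le> s' * sin_turn N (e - 1) + t' * sin_turn N e"
      using e st by (intro add_nonneg_nonneg mult_nonneg_nonneg sin_turn_nonneg) simp_all
    then have "0 \<le> wedge (side_direction N (int j + 1)) ?z'"
      unfolding z'_right using cos_pi_over_N_pos by (simp add: divide_nonneg_pos)
    then show False
      using z_right \<open>?z = ?z'\<close> by simp
  next
    case False
    then have "s' * sin_turn N e + t' * sin_turn N (e + 1) \<le> 0"
      using e st by (intro add_nonpos_nonpos mult_nonneg_nonpos sin_turn_nonpos) simp_all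
    then have "wedge (side_direction N (int j)) ?z' \<le> 0"
      unfolding z'_left using cos_pi_over_N_pos by (simp add: divide_nonpos_pos)
    then show False
      using z_left \<open>?z = ?z'\<close> by simp
  qed
qed

lemma polygon_triangle_inter_subset:
  assumes "j < N" "k < N" "j \<noteq> k"
  shows "polygon_triangle N j \<inter> polygon_triangle N k \<subseteq>
    span {polygon_vertex N (int j)} \<union> span {polygon_vertex N (int j + 1)}"
proof
  fix z assume "z \<in> polygon_triangle N j \<inter> polygon_triangle N k"
  then obtain s t s' t' where st: "0 \<le> s" "0 \<le> t" "0 \<le> s'" "0 \<le> t'"
    and z: "z = s *\<^sub>R polygon_vertex N (int j) + t *\<^sub>R polygon_vertex N (int j + 1)"
    and z': "z = s' *\<^sub>R polygon_vertex N (int k) + t' *\<^sub>R polygon_vertex N (int k + 1)"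
    unfolding polygon_triangle_def convex_hull_3 by auto
  consider "s = 0" | "t = 0" | "0 < s" "0 < t"
    using st by linarith
  then show "z \<in> span {polygon_vertex N (int j)} \<union> span {polygon_vertex N (int j + 1)}"
  proof cases
    case 3
    then show ?thesis
      using polygon_cone_interiors_disjoint[OF assms 3 st(3,4)] z z' by simp
  qed (simp_all add: z span_base span_scale)
qed

lemma negligible_polygon_triangle_inter:
  "j < N \<Longrightarrow> k < N \<Longrightarrow> j \<noteq> k \<Longrightarrow> negligible (polygon_triangle N j \<inter> polygon_triangle N k)"
  by (rule negligible_subset[OF _ polygon_triangle_inter_subset])
    (simp_all add: negligible_Un negligible_span_singleton)

lemma measure_polygon_triangle:
  "polygon_triangle N k \<in> lmeasurable \<and> measure lebesgue (polygon_triangle N k) = tan (pi / real N) / 4"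
proof -
  have "sin_turn N 1 = 2 * sin (pi / real N) * cos (pi / real N)"
    using sin_double[of "pi / real N"] by (simp add: sin_turn_def)
  then have "wedge (polygon_vertex N (int k)) (polygon_vertex N (int k + 1)) = tan (pi / real N) / 2"
    using cos_pi_over_N_pos
    by (simp add: polygon_vertex_def wedge_side_direction tan_def power2_eq_square field_simps)
  moreover have "0 \<le> tan (pi / real N)"
    using pi_over_N_bounds by (simp add: tan_def cos_pi_over_N_pos sin_pi_over_N_pos less_imp_le)
  ultimately show ?thesis
    using measure_triangle[of "polygon_vertex N (int k)" "polygon_vertex N (int k + 1)"]
    by (simp add: polygon_triangle_def)
qed

lemma measure_Omega_hat: "measure lebesgue (Omega_hat N) = real N / 4 * tan (pi / real N)"
proof -
  have "measure lebesgue (Omega_hat N) = (\<Sum>k<N. measure lebesgue (polygon_triangle N k))"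
    unfolding Omega_hat_eq_Union_polygon_triangles
    using measure_polygon_triangle negligible_polygon_triangle_inter
    by (intro measure_negligible_finite_Union_image) (auto simp: pairwise_def)
  then show ?thesis
    by (simp add: measure_polygon_triangle)
qed

lemma Omega_hat_lmeasurable: "Omega_hat N \<in> lmeasurable"
  unfolding Omega_hat_eq_convex_hull
  by (intro lmeasurable_compact finite_imp_compact_convex_hull) simp

end

theorem lemma5p2:
  fixes N :: nat
  assumes "N \<ge> 4" and "even N"
  shows "regular_ngon_inscribed N 0 (1 / (2 * cos (pi / real N))) (Omega_hat N)
         \<and> Omega_hat N \<in> sets lebesgue
         \<and> measure lebesgue (Omega_hat N) = real N / 4 * tan (pi / real N)"
proof -
  have vertices: "(\<lambda>k. polygon_vertex N (int k)) ` {..<N} = {0 + complex_of_real (1 / (2 * cos (pi / real N))) *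
      cis ((pi / 2 + pi / real N) + 2 * pi * real k / real N) | k. k < N}"
    by (auto simp: polygon_vertex_def side_direction_def scaleR_conv_of_real)
  have "regular_ngon_inscribed N 0 (1 / (2 * cos (pi / real N))) (Omega_hat N)"
    unfolding regular_ngon_inscribed_def Omega_hat_eq_convex_hull[OF assms]
    by (rule exI[of _ "pi / 2 + pi / real N"]) (simp only: vertices)
  then show ?thesis
    using Omega_hat_lmeasurable[OF assms] measure_Omega_hat[OF assms] by auto
qed

end
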